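(* Consider ASAGA with step size $\gamma>0$ (described in the context). For all $t\ge0$, $$a_{t+1}\le\Big(1-\frac{\gamma\mu}{2}\Big)a_t+\gamma^2C_1\,\mathbb{E}\|g_t\|^2+\gamma^2C_2\sum_{u=(t-\tau)_+}^{t-1}\mathbb{E}\|g_u\|^2-2\gamma e_t,$$ where $C_1:=1+\sqrt\Delta\,\tau$, $C_2:=\sqrt\Delta+\gamma\mu C_1$, $a_t:=\mathbb{E}\|x_t-x^*\|^2$ and $e_t:=\mathbb{E}f(\hat x_t)-f(x^* )$.
   Context: Problem: $f(x)=\frac1n\sum_{i=1}^n f_i(x)$ on $\mathbb{R}^d$, each $f_i$ convex, differentiable with $L$-Lipschitz gradient $f_i'$; $f$ is $\mu$-strongly convex with minimizer $x^*$. $S_i$ is the support of $f_i'$. $p_v:=|\{i:v\in S_i\}|/n$; $D$ diagonal with entries $1/p_v$ (for $p_v>0$); $D_i:=P_{S_i}D$ with $P_{S_i}$ the coordinate projection onto $S_i$. $\Delta:=\frac1n\max_v|\{i:v\in S_i\}|$. ASAGA: shared memory holds $x$ (initially $x_0$) and $\alpha_1,\dots,\alpha_n$ (initially arbitrary fixed $\alpha_i^0$). Cores concurrently and without locks repeat: (1) read $x$ and all $\alpha_j$ into local copies $\hat x,\hat\alpha_j$, possibly inconsistently, in a manner not depending on the next sample; (2) sample $i$ uniformly from $\{1,\dots,n\}$ independently; (3) compute $\delta=-\gamma(f_i'(\hat x)-\hat\alpha_i+D_i\frac1n\sum_k\hat\alpha_k)$; (4) for each $v\in S_i$ atomically add $[\delta]_v$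 to $[x]_v$ and set $[\alpha_i]_v\leftarrow[f_i'(\hat x)]_v$. Iterations are labeled $t=0,1,\dots$ in order of completion of their read step; $\hat x_t,\hat\alpha^t,i_t$ are the reads and sample of iteration $t$; $g_t:=f'_{i_t}(\hat x_t)-\hat\alpha^t_{i_t}+D_{i_t}(\frac1n\sum_k\hat\alpha^t_k)$. Then $[\hat x_t]_v=[x_0]_v-\gamma\sum[g_u]_v$ over those $u<t$ whose write to coordinate $v$ was completed before iteration $t$ read it, and $i_r$ is independent of $\hat x_t$ for $r\ge t$. Bounded overlap: every write of iteration $t$ is completed before iteration $t+\tau+1$ starts reading. The virtual iterate is defined by $x_{t+1}:=x_t-\gamma g_t$ (starting at $x_0$). $(s)_+:=\max(s,0)$; $\mathbb{E}$ is expectation over all randomness. *)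

theory Defs
  imports "HOL-Probability.Probability"
begin

definition strongly_convex_on :: "real \<Rightarrow> ('a::real_normed_vector) set \<Rightarrow> ('a \<Rightarrow> real) \<Rightarrow> bool" where
  "strongly_convex_on \<mu> A g \<longleftrightarrow> convex A \<and>
     (\<forall>x\<in>A. \<forall>y\<in>A. \<forall>t::real. 0 \<le> t \<and> t \<le> 1 \<longrightarrow>
        g ((1 - t) *\<^sub>R x + t *\<^sub>R y) \<le> (1 - t) * g x + t * g y - \<mu> / 2 * t * (1 - t) * (norm (x - y))\<^sup>2)"

definition favg :: "nat \<Rightarrow> (nat \<Rightarrow> real^'d \<Rightarrow> real) \<Rightarrow> real^'d \<Rightarrow> real" where
  "favg n fs x = (\<Sum>i<n. fs i x) / real n"

definition supp :: "(nat \<Rightarrow> real^'d \<Rightarrow> real^'d) \<Rightarrow> nat \<Rightarrow> 'd set" where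
  "supp fs' i = {v. \<exists>x. fs' i x $ v \<noteq> 0}"

definition pv :: "nat \<Rightarrow> (nat \<Rightarrow> real^'d \<Rightarrow> real^'d) \<Rightarrow> 'd \<Rightarrow> real" where
  "pv n fs' v = real (card {i\<in>{..<n}. v \<in> supp fs' i}) / real n"

text \<open>D_i y = P_{S_i} D y, D diagonal with entries 1/p_v (for v in S_i we have p_v > 0).\<close>
definition Dmat :: "nat \<Rightarrow> (nat \<Rightarrow> real^'d \<Rightarrow> real^'d) \<Rightarrow> nat \<Rightarrow> real^'d \<Rightarrow> real^'d" where
  "Dmat n fs' i y = (\<chi> v. if v \<in> supp fs' i then y $ v / pv n fs' v else 0)"

definition Delta :: "nat \<Rightarrow> (nat \<Rightarrow> real^'d \<Rightarrow> real^'d) \<Rightarrow> real" where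
  "Delta n fs' = real (Max (range (\<lambda>v::'d::finite. card {i\<in>{..<n}. v \<in> supp fs' i}))) / real n"

text \<open>The ASAGA update direction g_t, computed from the sample i_t and the
  (possibly inconsistent) reads xh = hat x_t and ah = (hat alpha^t_j)_j.\<close>
definition gdir :: "nat \<Rightarrow> (nat \<Rightarrow> real^'d \<Rightarrow> real^'d) \<Rightarrow> nat \<Rightarrow> real^'d \<Rightarrow> (nat \<Rightarrow> real^'d) \<Rightarrow> real^'d" where
  "gdir n fs' i xh ah = fs' i xh - ah i + Dmat n fs' i ((\<Sum>k<n. ah k) /\<^sub>R real n)"

end

theory Submission
  imports Defs
begin

text \<open>With \<open>x t\<close> the virtual iterate and \<open>xh t\<close> the read of iteration \<open>t\<close>,
  \<open>\<parallel>x (t+1) - x\<^sup>*\<parallel>\<^sup>2 = \<parallel>x t - x\<^sup>*\<parallel>\<^sup>2 - 2\<gamma> \<langle>xh t - x\<^sup>*, g t\<rangle> + 2\<gamma> \<langle>xh t - x t, g t\<rangle> + \<gamma>\<^sup>2 \<parallel>g t\<parallel>\<^sup>2\<close>.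
  The sample \<open>i\<^sub>t\<close> is uniform and independent of the reads, and \<open>D\<close> reweights the mean of the
  \<open>\<alpha>\<^sub>j\<close> so that averaging over \<open>i\<^sub>t\<close> recovers it; hence
  \<open>E\<langle>xh t - x\<^sup>*, g t\<rangle> = E\<langle>xh t - x\<^sup>*, f'(xh t)\<rangle>\<close>, which strong convexity bounds below by
  \<open>e t + \<mu>/4 a t - \<mu>/2 E\<parallel>xh t - x t\<parallel>\<^sup>2\<close>. By bounded overlap, each coordinate of \<open>xh t - x t\<close> is
  at most \<open>\<gamma>\<close> times the sum of \<open>|g u c|\<close> over \<open>t - \<tau> \<le> u < t\<close>, so both delay terms
  reduce to expectations of \<open>\<Sum>\<^sub>c |g u c| |g v c|\<close>. For \<open>u < v\<close>, \<open>g v\<close> vanishes off \<open>S\<^bsub>i\<^sub>v\<^esub>\<close> and \<open>i\<^sub>v\<close> is independent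
  of \<open>g u\<close>, so coordinate \<open>c\<close> survives with probability \<open>p\<^sub>c \<le> \<Delta>\<close>; a weighted AM-GM inequality
  then gives the bound \<open>\<surd>\<Delta>/2 (E\<parallel>g u\<parallel>\<^sup>2 + E\<parallel>g v\<parallel>\<^sup>2)\<close>.

  All random quantities take finitely many values, which makes integrability automatic.\<close>

lemma finite_vec_components:
  assumes "\<And>v. finite (F v)"
  shows "finite {y::'a^'n. \<forall>v. y $ v \<in> F v}"
proof -
  have "{y::'a^'n. \<forall>v. y $ v \<in> F v} \<subseteq> vec_lambda ` PiE UNIV F"
  proof
    fix y :: "'a^'n" assume "y \<in> {y. \<forall>v. y $ v \<in> F v}"
    then have "(\<lambda>v. y $ v) \<in> PiE UNIV F" by auto
    then show "y \<in> vec_lambda ` PiE UNIV F" by (metis image_eqI vec_lambda_eta)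
  qed
  moreover have "finite (PiE UNIV F)" by (rule finite_PiE) (auto simp: assms)
  ultimately show ?thesis by (meson finite_imageI finite_subset)
qed

lemma finite_image_comp: "finite (f ` S) \<Longrightarrow> finite ((\<lambda>s. h (f s)) ` S)"
  by (metis finite_imageI image_image)

lemma finite_image_pair:
  assumes "finite (f ` S)" "finite (k ` S)"
  shows "finite ((\<lambda>s. h (f s) (k s)) ` S)"
proof -
  have "(\<lambda>s. h (f s) (k s)) ` S \<subseteq> (\<lambda>(p, q). h p q) ` (f ` S \<times> k ` S)" by auto
  moreover have "finite ((\<lambda>(p, q). h p q) ` (f ` S \<times> k ` S))" using assms by auto
  ultimately show ?thesis by (rule finite_subset)
qed

lemma finite_image_sum:
  assumes "finite I" "\<And>i. i \<in> I \<Longrightarrow> finite (f i ` S)"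
  shows "finite ((\<lambda>s. \<Sum>i\<in>I. f i s) ` S)"
proof -
  have "(\<lambda>s. \<Sum>i\<in>I. f i s) ` S \<subseteq> (\<lambda>c. \<Sum>i\<in>I. c i) ` PiE I (\<lambda>i. f i ` S)"
  proof safe
    fix s assume "s \<in> S"
    then have "restrict (\<lambda>i. f i s) I \<in> PiE I (\<lambda>i. f i ` S)" by auto
    then show "(\<Sum>i\<in>I. f i s) \<in> (\<lambda>c. \<Sum>i\<in>I. c i) ` PiE I (\<lambda>i. f i ` S)"
      by (intro image_eqI[of _ "\<lambda>c. \<Sum>i\<in>I. c i" "restrict (\<lambda>i. f i s) I"]) simp_all
  qed
  moreover have "finite (PiE I (\<lambda>i. f i ` S))" using assms by (intro finite_PiE) auto
  ultimately show ?thesis by (meson finite_imageI finite_subset)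
qed

lemma (in finite_measure) integrable_finite_range:
  fixes f :: "'a \<Rightarrow> real"
  assumes "f \<in> borel_measurable M" "finite (f ` space M)"
  shows "integrable M f"
proof (rule integrable_const_bound[OF _ assms(1)])
  show "AE \<omega> in M. norm (f \<omega>) \<le> (\<Sum>y\<in>f ` space M. norm y)"
    by (rule AE_I2) (rule member_le_sum, auto simp: assms(2))
qed

lemma (in prob_space) integral_indicator_mult_indep:
  fixes \<Phi> :: "'a \<Rightarrow> real"
  assumes indep: "indep_set \<A> \<B>" and A: "A \<in> \<A>"
    and level: "\<And>c. {\<omega> \<in> space M. \<Phi> \<omega> = c} \<in> \<B>"
    and fin: "finite (\<Phi> ` space M)"
  shows "integrable M \<Phi>"
    and "integral\<^sup>L M (\<lambda>\<omega>. indicator A \<omega> * \<Phi> \<omega>) = prob A * integral\<^sup>L M \<Phi>"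
proof -
  define R where "R = \<Phi> ` space M"
  have finR: "finite R" using fin by (simp add: R_def)
  define B where "B c = {\<omega> \<in> space M. \<Phi> \<omega> = c}" for c
  have BM: "B c \<in> sets M" for c using indep_setD_ev2[OF indep] level by (auto simp: B_def)
  have AM: "A \<in> sets M" using indep_setD_ev1[OF indep] A by blast
  have ind: "prob (A \<inter> B c) = prob A * prob (B c)" for c
    unfolding B_def by (rule indep_setD[OF indep A level])
  have dec: "\<Phi> \<omega> = (\<Sum>c\<in>R. c * indicator (B c) \<omega>)" if "\<omega> \<in> space M" for \<omega>
  proof -
    have "(\<Sum>c\<in>R. c * indicator (B c) \<omega>) = (\<Sum>c\<in>R. if c = \<Phi> \<omega> then c else 0)"
      by (rule sum.cong) (auto simp: B_def that indicator_def)
    also have "\<dots> = \<Phi> \<omega>" using finR that by (simp add: R_def sum.delta)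
    finally show ?thesis by simp
  qed
  have int: "integrable M (\<lambda>\<omega>. c * indicator S \<omega>)" if "S \<in> sets M" for c :: real and S
    using that by (intro integrable_mult_right integrable_real_indicator) (auto simp: emeasure_eq_measure)
  have "integrable M (\<lambda>\<omega>. \<Sum>c\<in>R. c * indicator (B c) \<omega>)"
    using BM int by auto
  moreover have "integrable M \<Phi> \<longleftrightarrow> integrable M (\<lambda>\<omega>. \<Sum>c\<in>R. c * indicator (B c) \<omega>)"
    by (rule Bochner_Integration.integrable_cong) (auto simp: dec)
  ultimately show "integrable M \<Phi>" by simp
  have "integral\<^sup>L M \<Phi> = integral\<^sup>L M (\<lambda>\<omega>. \<Sum>c\<in>R. c * indicator (B c) \<omega>)"
    by (rule Bochner_Integration.integral_cong) (auto simp: dec)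
  also have "\<dots> = (\<Sum>c\<in>R. c * prob (B c))"
    using BM int by (simp add: Bochner_Integration.integral_sum)
  finally have E: "integral\<^sup>L M \<Phi> = (\<Sum>c\<in>R. c * prob (B c))" .
  have "integral\<^sup>L M (\<lambda>\<omega>. indicator A \<omega> * \<Phi> \<omega>)
      = integral\<^sup>L M (\<lambda>\<omega>. \<Sum>c\<in>R. c * indicator (A \<inter> B c) \<omega>)"
    by (rule Bochner_Integration.integral_cong)
      (auto simp: dec sum_distrib_left indicator_inter_arith algebra_simps)
  also have "\<dots> = (\<Sum>c\<in>R. c * prob (A \<inter> B c))"
    using BM AM int by (simp add: Bochner_Integration.integral_sum)
  also have "\<dots> = prob A * integral\<^sup>L M \<Phi>"
    by (simp add: E ind sum_distrib_left algebra_simps)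
  finally show "integral\<^sup>L M (\<lambda>\<omega>. indicator A \<omega> * \<Phi> \<omega>) = prob A * integral\<^sup>L M \<Phi>" .
qed

lemma abs_mult_le_weighted_squares:
  fixes a b r :: real
  assumes r: "0 < r"
  shows "\<bar>a\<bar> * \<bar>b\<bar> \<le> a\<^sup>2 / (2 * r) + r / 2 * b\<^sup>2"
proof -
  have "0 \<le> (\<bar>a\<bar> - r * \<bar>b\<bar>)\<^sup>2" by simp
  then have "2 * r * (\<bar>a\<bar> * \<bar>b\<bar>) \<le> a\<^sup>2 + r\<^sup>2 * b\<^sup>2"
    by (simp add: power2_eq_square algebra_simps)
  then show ?thesis
    using r by (simp add: field_simps power2_eq_square)
qed

lemma power2_norm_diff_le:
  fixes p q :: "'a::real_inner"
  shows "(norm (p - q))\<^sup>2 \<le> 2 * (norm p)\<^sup>2 + 2 * (norm q)\<^sup>2"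
proof -
  have "0 \<le> (norm (p + q))\<^sup>2" by simp
  then show ?thesis
    by (simp add: power2_norm_eq_inner inner_add_left inner_add_right inner_diff_left
        inner_diff_right inner_commute)
qed

lemma power2_norm_vec: "(norm (y::real^'n))\<^sup>2 = (\<Sum>c\<in>UNIV. (y $ c)\<^sup>2)"
  unfolding power2_norm_eq_inner inner_vec_def by (simp add: power2_eq_square)

lemma strongly_convex_on_gradient_ineq:
  fixes f :: "'a::real_inner \<Rightarrow> real"
  assumes der: "(f has_derivative (\<lambda>h. D \<bullet> h)) (at y)"
    and sc: "strongly_convex_on \<mu> UNIV f"
  shows "f y - f z + \<mu> / 2 * (norm (y - z))\<^sup>2 \<le> (y - z) \<bullet> D"
proof -
  define d where "d = z - y"
  define \<phi> where "\<phi> s = f (y + s *\<^sub>R d)" for s :: real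
  have line: "((\<lambda>s::real. y + s *\<^sub>R d) has_derivative (\<lambda>s. s *\<^sub>R d)) (at 0)"
    by (auto intro!: derivative_eq_intros)
  have "(\<phi> has_derivative (\<lambda>s. D \<bullet> (s *\<^sub>R d))) (at 0)"
    unfolding \<phi>_def using has_derivative_compose[OF line, of f "\<lambda>h. D \<bullet> h"] der by simp
  moreover have "(\<lambda>s. D \<bullet> (s *\<^sub>R d)) = (*) (D \<bullet> d)" by (auto simp: fun_eq_iff)
  ultimately have "(\<phi> has_field_derivative (D \<bullet> d)) (at 0 within {0<..})"
    by (simp add: has_field_derivative_def mult.commute has_derivative_at_withinI)
  then have lim1: "((\<lambda>s. (\<phi> s - \<phi> 0) / s) \<longlongrightarrow> D \<bullet> d) (at_right 0)"
    by (simp add: has_field_derivative_iff)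
  have lim2: "((\<lambda>s. f z - f y - \<mu> / 2 * (1 - s) * (norm (y - z))\<^sup>2)
      \<longlongrightarrow> f z - f y - \<mu> / 2 * (1 - 0) * (norm (y - z))\<^sup>2) (at_right 0)"
    by (intro tendsto_intros)
  have ev: "\<forall>\<^sub>F s in at_right 0. (\<phi> s - \<phi> 0) / s \<le> f z - f y - \<mu> / 2 * (1 - s) * (norm (y - z))\<^sup>2"
    unfolding eventually_at_right_field
  proof (intro exI[of _ 1] conjI allI impI)
    fix s :: real assume s: "0 < s" "s < 1"
    have "y + s *\<^sub>R d = (1 - s) *\<^sub>R y + s *\<^sub>R z" by (simp add: d_def algebra_simps)
    then have "\<phi> s \<le> (1 - s) * f y + s * f z - \<mu> / 2 * s * (1 - s) * (norm (y - z))\<^sup>2"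
      using sc s unfolding strongly_convex_on_def \<phi>_def by auto
    then have "\<phi> s - \<phi> 0 \<le> s * (f z - f y - \<mu> / 2 * (1 - s) * (norm (y - z))\<^sup>2)"
      by (simp add: \<phi>_def algebra_simps)
    then show "(\<phi> s - \<phi> 0) / s \<le> f z - f y - \<mu> / 2 * (1 - s) * (norm (y - z))\<^sup>2"
      using s by (simp add: divide_le_eq mult.commute)
  qed simp
  have "D \<bullet> d \<le> f z - f y - \<mu> / 2 * (1 - 0) * (norm (y - z))\<^sup>2"
    by (rule tendsto_le[OF _ lim2 lim1 ev]) simp
  moreover have "D \<bullet> d = - ((y - z) \<bullet> D)"
    by (simp add: d_def inner_commute inner_diff_left inner_diff_right)
  ultimately show ?thesis by simp
qed

lemma has_derivative_favg:
  assumes "\<And>i. i < n \<Longrightarrow> (fs i has_derivative (\<lambda>h. fs' i y \<bullet> h)) (at y)"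
  shows "(favg n fs has_derivative (\<lambda>h. ((\<Sum>i<n. fs' i y) /\<^sub>R real n) \<bullet> h)) (at y)"
proof -
  have "((\<lambda>x. \<Sum>i<n. fs i x) has_derivative (\<lambda>h. \<Sum>i<n. fs' i y \<bullet> h)) (at y)"
    by (rule has_derivative_sum) (use assms in auto)
  then have "((\<lambda>x. (\<Sum>i<n. fs i x) * inverse (real n))
      has_derivative (\<lambda>h. (\<Sum>i<n. fs' i y \<bullet> h) * inverse (real n))) (at y)"
    by (rule has_derivative_mult_left)
  moreover have "(\<lambda>h. (\<Sum>i<n. fs' i y \<bullet> h) / real n) = (\<lambda>h. ((\<Sum>i<n. fs' i y) /\<^sub>R real n) \<bullet> h)"
    by (simp add: inner_sum_left divide_inverse mult.commute)
  ultimately show ?thesis unfolding favg_def[abs_def] by (simp add: divide_inverse)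
qed

lemma fs'_nth_notin_supp: "v \<notin> supp fs' i \<Longrightarrow> fs' i y $ v = 0"
  by (auto simp: supp_def)

lemma Dmat_nth_notin_supp: "v \<notin> supp fs' i \<Longrightarrow> Dmat n fs' i y $ v = 0"
  by (simp add: Dmat_def)

lemma pv_le_Delta: "pv n fs' c \<le> Delta n fs'"
proof -
  have "card {i \<in> {..<n}. c \<in> supp fs' i} \<le> Max (range (\<lambda>v. card {i \<in> {..<n}. v \<in> supp fs' i}))"
    by (rule Max_ge) auto
  then show ?thesis unfolding pv_def Delta_def by (intro divide_right_mono) auto
qed

lemma Delta_nonneg: "0 \<le> Delta n fs'"
  by (simp add: Delta_def)

lemma pv_pos: "j < n \<Longrightarrow> c \<in> supp fs' j \<Longrightarrow> 0 < pv n fs' c"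
  unfolding pv_def by (rule divide_pos_pos) (auto simp: card_gt_0_iff)

lemma notin_supp_if_Delta_eq_0:
  assumes "Delta n fs' = 0" "j < n"
  shows "c \<notin> supp fs' j"
  using pv_pos[OF assms(2)] pv_le_Delta[of n fs' c] assms(1) by force

text \<open>Coordinate \<open>c\<close> is kept by exactly \<open>n p\<^sub>c\<close> of the \<open>D\<^sub>j\<close>, each scaling it by \<open>1/p\<^sub>c\<close>.\<close>
lemma sum_Dmat_mean:
  assumes n: "n \<ge> 1" and b: "\<And>j c. j < n \<Longrightarrow> c \<notin> supp fs' j \<Longrightarrow> b j $ c = 0"
  shows "(\<Sum>j<n. Dmat n fs' j ((\<Sum>k<n. b k) /\<^sub>R real n)) = (\<Sum>k<n. b k)"
proof (subst vec_eq_iff, intro allI)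
  fix c
  define K where "K = card {j \<in> {..<n}. c \<in> supp fs' j}"
  define S where "S = (\<Sum>k<n. b k $ c)"
  have "(\<Sum>j<n. Dmat n fs' j ((\<Sum>k<n. b k) /\<^sub>R real n)) $ c
        = (\<Sum>j<n. if c \<in> supp fs' j then (S / real n) / pv n fs' c else 0)"
  proof -
    have mean: "((\<Sum>k<n. b k) /\<^sub>R real n) $ c = S / real n"
      by (simp add: S_def sum_component divide_inverse mult.commute)
    show ?thesis unfolding sum_component Dmat_def vec_lambda_beta mean by (rule refl)
  qed
  also have "\<dots> = real K * ((S / real n) / pv n fs' c)"
    by (simp add: K_def sum.inter_filter[symmetric])
  also have "\<dots> = S"
  proof (cases "K = 0")
    case True
    then have "\<forall>j<n. c \<notin> supp fs' j" by (auto simp: K_def)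
    then show ?thesis unfolding S_def using b by (simp add: sum.neutral)
  next
    case False
    have "pv n fs' c = real K / real n" by (simp add: pv_def K_def)
    then show ?thesis using False n by (simp add: field_simps)
  qed
  finally show "(\<Sum>j<n. Dmat n fs' j ((\<Sum>k<n. b k) /\<^sub>R real n)) $ c = (\<Sum>k<n. b k) $ c"
    by (simp add: S_def sum_component)
qed

lemma sum_gdir:
  assumes "n \<ge> 1" "\<And>j c. j < n \<Longrightarrow> c \<notin> supp fs' j \<Longrightarrow> b j $ c = 0"
  shows "(\<Sum>j<n. gdir n fs' j y b) = (\<Sum>j<n. fs' j y)"
  using sum_Dmat_mean[OF assms] by (simp add: gdir_def sum.distrib sum_subtractf)

lemma gdir_cong:
  assumes "i < n" "\<And>j. j < n \<Longrightarrow> b j = b' j"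
  shows "gdir n fs' i y b = gdir n fs' i y b'"
  using assms by (simp add: gdir_def)


locale asaga =
  fixes M :: "'w measure"
    and n :: nat and fs :: "nat \<Rightarrow> real^'d \<Rightarrow> real" and fs' :: "nat \<Rightarrow> real^'d \<Rightarrow> real^'d"
    and \<mu> \<gamma> :: real and \<tau> :: nat and xstar x0 :: "real^'d" and \<alpha>0 :: "nat \<Rightarrow> real^'d"
    and smp :: "nat \<Rightarrow> 'w \<Rightarrow> nat"
    and xh :: "nat \<Rightarrow> 'w \<Rightarrow> real^'d"
    and ah :: "nat \<Rightarrow> nat \<Rightarrow> 'w \<Rightarrow> real^'d"
    and rd :: "nat \<Rightarrow> nat \<Rightarrow> 'd \<Rightarrow> 'w \<Rightarrow> bool"
    and A :: "nat \<Rightarrow> nat \<Rightarrow> 'd \<Rightarrow> 'w \<Rightarrow> nat option"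
    and g :: "nat \<Rightarrow> 'w \<Rightarrow> real^'d" and x :: "nat \<Rightarrow> 'w \<Rightarrow> real^'d"
    and a e :: "nat \<Rightarrow> real"
  assumes n_pos: "n \<ge> 1"
    and grad: "\<And>i y. i < n \<Longrightarrow> (fs i has_derivative (\<lambda>h. fs' i y \<bullet> h)) (at y)"
    and continuous_on_fs': "\<And>i. i < n \<Longrightarrow> continuous_on UNIV (fs' i)"
    and mu_pos: "\<mu> > 0"
    and strong: "strongly_convex_on \<mu> UNIV (favg n fs)"
    and gamma_pos: "\<gamma> > 0"
    and alpha0_supp: "\<And>j v. j < n \<Longrightarrow> v \<notin> supp fs' j \<Longrightarrow> \<alpha>0 j $ v = 0"
    and P: "prob_space M"
    and smp_meas: "\<And>t. smp t \<in> measurable M (count_space UNIV)"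
    and xh_meas[measurable]: "\<And>t. xh t \<in> borel_measurable M"
    and ah_meas: "\<And>t j. ah t j \<in> borel_measurable M"
    and smp_range: "\<And>t \<omega>. \<omega> \<in> space M \<Longrightarrow> smp t \<omega> < n"
    and smp_unif: "\<And>t j. j < n \<Longrightarrow> measure M {\<omega> \<in> space M. smp t \<omega> = j} = 1 / real n"
    and smp_indep: "\<And>t. prob_space.indep_set M
        (sets (vimage_algebra (space M) (smp t) (count_space UNIV)))
        (sets (vimage_algebra (space M)
           (\<lambda>\<omega>. (\<lambda>s\<in>{..t}. (xh s \<omega>, \<lambda>j\<in>{..<n}. ah s j \<omega>), \<lambda>s\<in>{..<t}. smp s \<omega>))
           (PiM {..t} (\<lambda>_. borel \<Otimes>\<^sub>M PiM {..<n} (\<lambda>_. borel)) \<Otimes>\<^sub>M PiM {..<t} (\<lambda>_. count_space UNIV))))"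
    and g_def: "g \<equiv> (\<lambda>t \<omega>. gdir n fs' (smp t \<omega>) (xh t \<omega>) (\<lambda>j. ah t j \<omega>))"
    and xh_read: "\<And>t v \<omega>. \<omega> \<in> space M \<Longrightarrow>
        xh t \<omega> $ v = x0 $ v - \<gamma> * (\<Sum>u | u < t \<and> v \<in> supp fs' (smp u \<omega>) \<and> rd t u v \<omega>. g u \<omega> $ v)"
    and overlap_x: "\<And>t u v \<omega>. \<omega> \<in> space M \<Longrightarrow> u + \<tau> + 1 \<le> t \<Longrightarrow> rd t u v \<omega>"
    and ah_read: "\<And>t j v \<omega>. \<omega> \<in> space M \<Longrightarrow> j < n \<Longrightarrow>
        ah t j \<omega> $ v = (case A t j v \<omega> of None \<Rightarrow> \<alpha>0 j $ v | Some u \<Rightarrow> fs' j (xh u \<omega>) $ v)"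
    and A_valid: "\<And>t j v \<omega> u. \<omega> \<in> space M \<Longrightarrow> A t j v \<omega> = Some u \<Longrightarrow>
        u < t \<and> smp u \<omega> = j \<and> v \<in> supp fs' j"
    and x_def: "x \<equiv> (\<lambda>t \<omega>. x0 - \<gamma> *\<^sub>R (\<Sum>u<t. g u \<omega>))"
    and a_def: "a \<equiv> (\<lambda>t. integral\<^sup>L M (\<lambda>\<omega>. (norm (x t \<omega> - xstar))\<^sup>2))"
    and e_def: "e \<equiv> (\<lambda>t. integral\<^sup>L M (\<lambda>\<omega>. favg n fs (xh t \<omega>)) - favg n fs xstar)"
begin

sublocale prob_space M by (rule P)

lemma ah_nth_notin_supp:
  assumes "\<omega> \<in> space M" "j < n" "v \<notin> supp fs' j"
  shows "ah t j \<omega> $ v = 0"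
  using ah_read[OF assms(1,2), of t v] alpha0_supp[OF assms(2,3)] fs'_nth_notin_supp[OF assms(3)]
  by (auto split: option.splits)

lemma g_nth_notin_supp:
  assumes "\<omega> \<in> space M" "v \<notin> supp fs' (smp t \<omega>)"
  shows "g t \<omega> $ v = 0"
  using assms smp_range[OF assms(1), of t]
  by (simp add: g_def gdir_def fs'_nth_notin_supp ah_nth_notin_supp Dmat_nth_notin_supp)

lemma g_restrict:
  "\<omega> \<in> space M \<Longrightarrow> g t \<omega> = gdir n fs' (smp t \<omega>) (xh t \<omega>) (restrict (\<lambda>j. ah t j \<omega>) {..<n})"
  unfolding g_def by (rule gdir_cong) (auto simp: smp_range)

lemma g_eq_sum_over_samples:
  "\<omega> \<in> space M \<Longrightarrow>
   g t \<omega> = (\<Sum>i<n. if smp t \<omega> = i then gdir n fs' i (xh t \<omega>) (\<lambda>j. ah t j \<omega>) else 0)"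
  using smp_range[of \<omega> t] by (simp add: g_def sum.delta')

lemma x_Suc: "x (Suc t) \<omega> = x t \<omega> - \<gamma> *\<^sub>R g t \<omega>"
  unfolding x_def by (simp add: algebra_simps)

lemma x_nth: "x t \<omega> $ c = x0 $ c - \<gamma> * (\<Sum>u<t. g u \<omega> $ c)"
  unfolding x_def by (simp add: sum_component)

lemma finite_range_ah_if_xh:
  assumes "\<And>u. u < t \<Longrightarrow> finite (xh u ` space M)" "j < n"
  shows "finite ((\<lambda>\<omega>. ah t j \<omega>) ` space M)"
proof -
  define F where "F v = {\<alpha>0 j $ v} \<union> (\<Union>u<t. (\<lambda>y. fs' j y $ v) ` (xh u ` space M))" for v
  have "finite (F v)" for v using assms(1) by (auto simp: F_def)
  then have fin: "finite {y::real^'d. \<forall>v. y $ v \<in> F v}" by (rule finite_vec_components)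
  have "(\<lambda>\<omega>. ah t j \<omega>) ` space M \<subseteq> {y::real^'d. \<forall>v. y $ v \<in> F v}"
  proof safe
    fix \<omega> v assume om: "\<omega> \<in> space M"
    show "ah t j \<omega> $ v \<in> F v"
    proof (cases "A t j v \<omega>")
      case None then show ?thesis using ah_read[OF om assms(2), of t v] by (simp add: F_def)
    next
      case (Some u)
      then have "u < t" using A_valid[OF om] by blast
      then show ?thesis using ah_read[OF om assms(2), of t v] Some om by (auto simp: F_def)
    qed
  qed
  then show ?thesis using fin finite_subset by blast
qed

lemma finite_range_g_if_xh_ah:
  assumes "finite (xh t ` space M)" "\<And>j. j < n \<Longrightarrow> finite ((\<lambda>\<omega>. ah t j \<omega>) ` space M)"
  shows "finite (g t ` space M)"
proof -
  define Args where
    "Args = {..<n} \<times> xh t ` space M \<times> PiE {..<n} (\<lambda>j. (\<lambda>\<omega>. ah t j \<omega>) ` space M)"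
  have "g t ` space M \<subseteq> (\<lambda>(i, y, b). gdir n fs' i y b) ` Args"
  proof safe
    fix \<omega> assume om: "\<omega> \<in> space M"
    have "(smp t \<omega>, xh t \<omega>, restrict (\<lambda>j. ah t j \<omega>) {..<n}) \<in> Args"
      using om smp_range[OF om] by (auto simp: Args_def)
    then show "g t \<omega> \<in> (\<lambda>(i, y, b). gdir n fs' i y b) ` Args"
      using g_restrict[OF om] by (auto intro: rev_image_eqI)
  qed
  moreover have "finite Args" using assms by (auto simp: Args_def intro!: finite_PiE)
  ultimately show ?thesis by (meson finite_imageI finite_subset)
qed

text \<open>Each coordinate of \<open>xh t\<close> is \<open>x\<^sub>0\<close> minus \<open>\<gamma>\<close> times a partial sum of finitely-valued
  \<open>g u\<close> with \<open>u < t\<close>.\<close>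
lemma finite_range_xh: "finite (xh t ` space M)"
proof (induction t rule: less_induct)
  case (less t)
  have fg: "finite (g u ` space M)" if "u < t" for u
    using that less by (intro finite_range_g_if_xh_ah finite_range_ah_if_xh) auto
  define F where "F v = (\<lambda>(U, c). x0 $ v - \<gamma> * sum c U) `
      (Pow {..<t} \<times> PiE {..<t} (\<lambda>u. (\<lambda>y. y $ v) ` g u ` space M))" for v
  have "finite (Pow {..<t} \<times> PiE {..<t} (\<lambda>u. (\<lambda>y. y $ v) ` g u ` space M))" for v
    using fg by (intro finite_cartesian_product finite_PiE) auto
  then have "finite (F v)" for v unfolding F_def by (rule finite_imageI)
  then have fin: "finite {y::real^'d. \<forall>v. y $ v \<in> F v}" by (rule finite_vec_components)
  have "xh t ` space M \<subseteq> {y::real^'d. \<forall>v. y $ v \<in> F v}"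
  proof safe
    fix \<omega> v assume om: "\<omega> \<in> space M"
    define U where "U = {u. u < t \<and> v \<in> supp fs' (smp u \<omega>) \<and> rd t u v \<omega>}"
    define c where "c = restrict (\<lambda>u. g u \<omega> $ v) {..<t}"
    have mem: "(U, c) \<in> Pow {..<t} \<times> PiE {..<t} (\<lambda>u. (\<lambda>y. y $ v) ` g u ` space M)"
      using om by (auto simp: U_def c_def)
    have "sum c U = (\<Sum>u\<in>U. g u \<omega> $ v)" by (rule sum.cong) (auto simp: U_def c_def)
    then have "xh t \<omega> $ v = (\<lambda>(U, c). x0 $ v - \<gamma> * sum c U) (U, c)"
      using xh_read[OF om, of t v] by (simp add: U_def)
    then show "xh t \<omega> $ v \<in> F v" unfolding F_def using mem by (rule rev_image_eqI[rotated])
  qed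
  then show ?case using fin finite_subset by blast
qed

lemma finite_range_ah: "j < n \<Longrightarrow> finite ((\<lambda>\<omega>. ah t j \<omega>) ` space M)"
  by (rule finite_range_ah_if_xh) (auto simp: finite_range_xh)

lemma finite_range_ah_restrict: "finite ((\<lambda>\<omega>. restrict (\<lambda>k. ah t k \<omega>) {..<n}) ` space M)"
proof -
  have "(\<lambda>\<omega>. restrict (\<lambda>k. ah t k \<omega>) {..<n}) ` space M \<subseteq> PiE {..<n} (\<lambda>k. (\<lambda>\<omega>. ah t k \<omega>) ` space M)"
    by (rule image_subsetI) (simp add: restrict_PiE_iff)
  moreover have "finite (PiE {..<n} (\<lambda>k. (\<lambda>\<omega>. ah t k \<omega>) ` space M))"
    by (intro finite_PiE) (auto simp: finite_range_ah)
  ultimately show ?thesis by (rule finite_subset)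
qed

lemma finite_range_g: "finite (g t ` space M)"
  by (rule finite_range_g_if_xh_ah) (auto simp: finite_range_xh finite_range_ah)

lemma finite_range_x: "finite (x t ` space M)"
  unfolding x_def by (rule finite_image_comp[OF finite_image_sum]) (auto simp: finite_range_g)

lemma finite_range_smp: "finite (smp t ` space M)"
  by (rule finite_subset[of _ "{..<n}"]) (auto simp: smp_range)

lemma continuous_on_fs: "i < n \<Longrightarrow> continuous_on UNIV (fs i)"
  by (meson continuous_at_imp_continuous_on grad has_derivative_continuous)

lemma continuous_on_favg: "continuous_on UNIV (favg n fs)"
  unfolding favg_def[abs_def]
  by (intro continuous_on_divide continuous_on_sum continuous_on_const)
    (use n_pos continuous_on_fs in auto)

lemma continuous_on_Dmat: "continuous_on UNIV (Dmat n fs' i)"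
  unfolding Dmat_def[abs_def]
proof (intro continuous_on_vec_lambda)
  fix v
  have "continuous_on UNIV (\<lambda>y::real^'d. y $ v / pv n fs' v)"
    by (intro linear_continuous_on bounded_linear_compose[OF bounded_linear_divide bounded_linear_vec_nth])
  then show "continuous_on UNIV (\<lambda>y::real^'d. if v \<in> supp fs' i then y $ v / pv n fs' v else 0)"
    by (cases "v \<in> supp fs' i") simp_all
qed

lemma measurable_gdir:
  fixes X :: "'z \<Rightarrow> real^'d"
  assumes i: "i < n" and X: "X \<in> borel_measurable N"
    and Y: "\<And>j. j < n \<Longrightarrow> Y j \<in> borel_measurable N"
  shows "(\<lambda>z. gdir n fs' i (X z) (\<lambda>j. Y j z)) \<in> borel_measurable N"
proof -
  have f1: "(\<lambda>z. fs' i (X z)) \<in> borel_measurable N"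
    using i by (intro measurable_compose[OF X borel_measurable_continuous_onI[OF continuous_on_fs']])
  have "(\<lambda>z. (\<Sum>k<n. Y k z) /\<^sub>R real n) \<in> borel_measurable N"
    using Y by (intro borel_measurable_scaleR borel_measurable_const borel_measurable_sum) auto
  then have f2: "(\<lambda>z. Dmat n fs' i ((\<Sum>k<n. Y k z) /\<^sub>R real n)) \<in> borel_measurable N"
    by (rule measurable_compose[OF _ borel_measurable_continuous_onI[OF continuous_on_Dmat]])
  show ?thesis
    unfolding gdir_def using f1 f2 Y[OF i] by (intro borel_measurable_add borel_measurable_diff) auto
qed

lemma measurable_gdir_sample:
  fixes X :: "'z \<Rightarrow> real^'d"
  assumes X: "X \<in> borel_measurable N" and Y: "\<And>j. j < n \<Longrightarrow> Y j \<in> borel_measurable N"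
    and I: "I \<in> measurable N (count_space UNIV)"
  shows "(\<lambda>z. \<Sum>i<n. if I z = i then gdir n fs' i (X z) (\<lambda>j. Y j z) else 0) \<in> borel_measurable N"
proof (rule borel_measurable_sum)
  fix i assume i: "i \<in> {..<n}"
  have "{z \<in> space N. I z = i} \<in> sets N"
    using measurable_sets[OF I, of "{i}"] by (simp add: vimage_def Int_def conj_commute)
  moreover have "(\<lambda>z. gdir n fs' i (X z) (\<lambda>j. Y j z)) \<in> borel_measurable N"
    using i by (intro measurable_gdir[OF _ X Y]) auto
  ultimately show "(\<lambda>z. if I z = i then gdir n fs' i (X z) (\<lambda>j. Y j z) else 0) \<in> borel_measurable N"
    by (intro measurable_If[OF _ borel_measurable_const])
qed

lemma measurable_g[measurable]: "g t \<in> borel_measurable M"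
proof -
  have "(\<lambda>\<omega>. \<Sum>i<n. if smp t \<omega> = i then gdir n fs' i (xh t \<omega>) (\<lambda>j. ah t j \<omega>) else 0)
      \<in> borel_measurable M"
    by (rule measurable_gdir_sample[OF xh_meas ah_meas smp_meas])
  then show ?thesis
    by (rule measurable_cong[THEN iffD1, rotated]) (simp add: g_eq_sum_over_samples)
qed

lemma measurable_x[measurable]: "x t \<in> borel_measurable M"
  unfolding x_def
  by (intro borel_measurable_diff borel_measurable_scaleR borel_measurable_const borel_measurable_sum)
    (auto simp: measurable_g)

definition grad_f :: "real^'d \<Rightarrow> real^'d" where
  "grad_f y = (\<Sum>i<n. fs' i y) /\<^sub>R real n"

lemma continuous_on_grad_f: "continuous_on UNIV grad_f"
  unfolding grad_f_def[abs_def]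
  by (intro continuous_on_scaleR continuous_on_sum continuous_on_const) (auto simp: continuous_on_fs')

lemma measurable_grad_f_xh[measurable]: "(\<lambda>\<omega>. grad_f (xh t \<omega>)) \<in> borel_measurable M"
  by (rule measurable_compose[OF xh_meas borel_measurable_continuous_onI[OF continuous_on_grad_f]])

lemma measurable_favg_xh[measurable]: "(\<lambda>\<omega>. favg n fs (xh t \<omega>)) \<in> borel_measurable M"
  by (rule measurable_compose[OF xh_meas borel_measurable_continuous_onI[OF continuous_on_favg]])

lemma strongly_convex_grad_f:
  "favg n fs y - favg n fs xstar + \<mu> / 2 * (norm (y - xstar))\<^sup>2 \<le> (y - xstar) \<bullet> grad_f y"
  unfolding grad_f_def by (rule strongly_convex_on_gradient_ineq[OF has_derivative_favg strong]) (rule grad)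

definition past :: "nat \<Rightarrow> 'w \<Rightarrow> (nat \<Rightarrow> (real^'d) \<times> (nat \<Rightarrow> real^'d)) \<times> (nat \<Rightarrow> nat)" where
  "past t \<omega> = (\<lambda>s\<in>{..t}. (xh s \<omega>, \<lambda>j\<in>{..<n}. ah s j \<omega>), \<lambda>s\<in>{..<t}. smp s \<omega>)"

definition past_measure :: "nat \<Rightarrow> ((nat \<Rightarrow> (real^'d) \<times> (nat \<Rightarrow> real^'d)) \<times> (nat \<Rightarrow> nat)) measure" where
  "past_measure t = PiM {..t} (\<lambda>_. borel \<Otimes>\<^sub>M PiM {..<n} (\<lambda>_. borel)) \<Otimes>\<^sub>M PiM {..<t} (\<lambda>_. count_space UNIV)"

lemma indep_sample_past:
  "indep_set (sets (vimage_algebra (space M) (smp t) (count_space UNIV)))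
             (sets (vimage_algebra (space M) (past t) (past_measure t)))"
  using smp_indep[of t] unfolding past_def[abs_def] past_measure_def .

lemma past_in_space: "\<omega> \<in> space M \<Longrightarrow> past t \<omega> \<in> space (past_measure t)"
  by (auto simp: past_def past_measure_def space_pair_measure space_PiM)

lemma measurable_past_reads:
  "s \<le> t \<Longrightarrow> (\<lambda>p. fst p s) \<in> past_measure t \<rightarrow>\<^sub>M (borel \<Otimes>\<^sub>M PiM {..<n} (\<lambda>_. borel))"
  unfolding past_measure_def
  by (rule measurable_compose[OF measurable_fst measurable_component_singleton]) auto

lemma measurable_past_xh: "s \<le> t \<Longrightarrow> (\<lambda>p. fst (fst p s)) \<in> borel_measurable (past_measure t)"
  by (rule measurable_compose[OF measurable_past_reads measurable_fst])

lemma measurable_past_ah: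
  "s \<le> t \<Longrightarrow> j < n \<Longrightarrow> (\<lambda>p. snd (fst p s) j) \<in> borel_measurable (past_measure t)"
  by (rule measurable_compose[OF measurable_compose[OF measurable_past_reads measurable_snd]
        measurable_component_singleton]) auto

lemma measurable_past_smp: "s < t \<Longrightarrow> (\<lambda>p. snd p s) \<in> measurable (past_measure t) (count_space UNIV)"
  unfolding past_measure_def
  by (rule measurable_compose[OF measurable_snd measurable_component_singleton]) auto

lemma sample_event_in_vimage:
  "{\<omega> \<in> space M. smp t \<omega> = j} \<in> sets (vimage_algebra (space M) (smp t) (count_space UNIV))"
proof -
  have "smp t -` {j} \<inter> space M \<in> sets (vimage_algebra (space M) (smp t) (count_space UNIV))"
    by (rule in_vimage_algebra) simp
  moreover have "smp t -` {j} \<inter> space M = {\<omega> \<in> space M. smp t \<omega> = j}" by auto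
  ultimately show ?thesis by simp
qed

lemma sample_event_sets: "{\<omega> \<in> space M. smp t \<omega> = j} \<in> sets M"
  using indep_setD_ev1[OF indep_sample_past] sample_event_in_vimage by blast

lemma integral_sample_indicator_mult:
  fixes \<Phi> :: "'w \<Rightarrow> real"
  assumes \<psi>: "\<psi> \<in> borel_measurable (past_measure t)"
    and \<Phi>: "\<And>\<omega>. \<omega> \<in> space M \<Longrightarrow> \<Phi> \<omega> = \<psi> (past t \<omega>)"
    and fin: "finite (\<Phi> ` space M)" and j: "j < n"
  shows "integral\<^sup>L M (\<lambda>\<omega>. indicator {\<omega> \<in> space M. smp t \<omega> = j} \<omega> * \<Phi> \<omega>) = integral\<^sup>L M \<Phi> / real n"
    and "integrable M \<Phi>"
proof -
  have level: "{\<omega> \<in> space M. \<Phi> \<omega> = c} \<in> sets (vimage_algebra (space M) (past t) (past_measure t))"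
    for c
  proof -
    have "past t -` (\<psi> -` {c} \<inter> space (past_measure t)) \<inter> space M
        \<in> sets (vimage_algebra (space M) (past t) (past_measure t))"
      by (rule in_vimage_algebra) (rule measurable_sets[OF \<psi>], simp)
    moreover have "past t -` (\<psi> -` {c} \<inter> space (past_measure t)) \<inter> space M = {\<omega> \<in> space M. \<Phi> \<omega> = c}"
      using past_in_space \<Phi> by auto
    ultimately show ?thesis by simp
  qed
  show "integrable M \<Phi>"
    by (rule integral_indicator_mult_indep(1)[OF indep_sample_past sample_event_in_vimage level fin])
  show "integral\<^sup>L M (\<lambda>\<omega>. indicator {\<omega> \<in> space M. smp t \<omega> = j} \<omega> * \<Phi> \<omega>) = integral\<^sup>L M \<Phi> / real n"
    using integral_indicator_mult_indep(2)[OF indep_sample_past sample_event_in_vimage level fin]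
    by (simp add: smp_unif[OF j])
qed

lemma expectation_inner_g_eq_grad_f:
  "integral\<^sup>L M (\<lambda>\<omega>. (xh t \<omega> - xstar) \<bullet> g t \<omega>)
     = integral\<^sup>L M (\<lambda>\<omega>. (xh t \<omega> - xstar) \<bullet> grad_f (xh t \<omega>))"
proof -
  define \<Phi> where "\<Phi> j \<omega> = (xh t \<omega> - xstar) \<bullet> gdir n fs' j (xh t \<omega>) (\<lambda>k. ah t k \<omega>)" for j \<omega>
  define AJ where "AJ j = {\<omega> \<in> space M. smp t \<omega> = j}" for j
  have indep: "integral\<^sup>L M (\<lambda>\<omega>. indicator (AJ j) \<omega> * \<Phi> j \<omega>) = integral\<^sup>L M (\<Phi> j) / real n
      \<and> integrable M (\<Phi> j)" if j: "j < n" for j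
  proof -
    define \<psi> where "\<psi> p = (fst (fst p t) - xstar) \<bullet> gdir n fs' j (fst (fst p t)) (\<lambda>k. snd (fst p t) k)"
      for p :: "(nat \<Rightarrow> (real^'d) \<times> (nat \<Rightarrow> real^'d)) \<times> (nat \<Rightarrow> nat)"
    have m: "\<psi> \<in> borel_measurable (past_measure t)"
      unfolding \<psi>_def
      by (intro borel_measurable_inner borel_measurable_diff borel_measurable_const
          measurable_past_xh measurable_gdir[OF j] measurable_past_ah) auto
    have restr: "gdir n fs' j (xh t \<omega>) (\<lambda>k. ah t k \<omega>)
        = gdir n fs' j (xh t \<omega>) (restrict (\<lambda>k. ah t k \<omega>) {..<n})" for \<omega>
      by (rule gdir_cong[OF j]) simp
    have eq: "\<Phi> j \<omega> = \<psi> (past t \<omega>)" if "\<omega> \<in> space M" for \<omega>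
      unfolding \<Phi>_def \<psi>_def past_def restr by simp
    have "finite ((\<lambda>\<omega>. (\<lambda>y b. (y - xstar) \<bullet> gdir n fs' j y b) (xh t \<omega>)
        (restrict (\<lambda>k. ah t k \<omega>) {..<n})) ` space M)"
      by (rule finite_image_pair[OF finite_range_xh finite_range_ah_restrict])
    then have fin: "finite (\<Phi> j ` space M)" unfolding \<Phi>_def restr .
    show ?thesis using integral_sample_indicator_mult[OF m eq fin j] by (simp add: AJ_def)
  qed
  have split: "(xh t \<omega> - xstar) \<bullet> g t \<omega> = (\<Sum>j<n. indicator (AJ j) \<omega> * \<Phi> j \<omega>)"
    if "\<omega> \<in> space M" for \<omega>
    unfolding g_eq_sum_over_samples[OF that] \<Phi>_def AJ_def
    by (simp add: inner_sum_right indicator_def that)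
  have int: "integrable M (\<lambda>\<omega>. indicator (AJ j) \<omega> * \<Phi> j \<omega>)" if "j < n" for j
    using integrable_real_mult_indicator[OF sample_event_sets[of t j] conjunct2[OF indep[OF that]]]
    by (simp add: AJ_def mult.commute)
  have average: "(\<Sum>j<n. \<Phi> j \<omega> / real n) = (xh t \<omega> - xstar) \<bullet> grad_f (xh t \<omega>)"
    if "\<omega> \<in> space M" for \<omega>
  proof -
    have "(\<Sum>j<n. \<Phi> j \<omega> / real n)
        = (xh t \<omega> - xstar) \<bullet> (\<Sum>j<n. gdir n fs' j (xh t \<omega>) (\<lambda>k. ah t k \<omega>)) / real n"
      by (simp add: \<Phi>_def inner_sum_right sum_divide_distrib)
    also have "\<dots> = (xh t \<omega> - xstar) \<bullet> (\<Sum>j<n. fs' j (xh t \<omega>)) / real n"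
      by (subst sum_gdir[OF n_pos]) (auto simp: ah_nth_notin_supp that)
    also have "\<dots> = (xh t \<omega> - xstar) \<bullet> grad_f (xh t \<omega>)"
      by (simp add: grad_f_def inner_scaleR_right divide_inverse mult.commute)
    finally show ?thesis .
  qed
  have "integral\<^sup>L M (\<lambda>\<omega>. (xh t \<omega> - xstar) \<bullet> g t \<omega>) = integral\<^sup>L M (\<lambda>\<omega>. \<Sum>j<n. indicator (AJ j) \<omega> * \<Phi> j \<omega>)"
    by (rule Bochner_Integration.integral_cong) (auto simp: split)
  also have "\<dots> = (\<Sum>j<n. integral\<^sup>L M (\<lambda>\<omega>. indicator (AJ j) \<omega> * \<Phi> j \<omega>))"
    by (rule Bochner_Integration.integral_sum) (auto simp: int)
  also have "\<dots> = (\<Sum>j<n. integral\<^sup>L M (\<lambda>\<omega>. \<Phi> j \<omega> / real n))"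
    by (rule sum.cong) (auto simp: indep)
  also have "\<dots> = integral\<^sup>L M (\<lambda>\<omega>. \<Sum>j<n. \<Phi> j \<omega> / real n)"
    by (rule Bochner_Integration.integral_sum[symmetric]) (auto simp: indep)
  also have "\<dots> = integral\<^sup>L M (\<lambda>\<omega>. (xh t \<omega> - xstar) \<bullet> grad_f (xh t \<omega>))"
    by (rule Bochner_Integration.integral_cong) (auto simp: average)
  finally show ?thesis .
qed

definition overlap :: "nat \<Rightarrow> nat \<Rightarrow> 'w \<Rightarrow> real" where
  "overlap u v \<omega> = (\<Sum>c\<in>UNIV. \<bar>g u \<omega> $ c\<bar> * \<bar>g v \<omega> $ c\<bar>)"

definition Eg2 :: "nat \<Rightarrow> real" where
  "Eg2 u = integral\<^sup>L M (\<lambda>\<omega>. (norm (g u \<omega>))\<^sup>2)"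

lemma overlap_self: "overlap u u = (\<lambda>\<omega>. (norm (g u \<omega>))\<^sup>2)"
  unfolding overlap_def power2_norm_vec
  by (intro ext sum.cong) (auto simp: power2_eq_square abs_mult_self_eq)

lemma overlap_commute: "overlap u v = overlap v u"
  by (simp add: overlap_def fun_eq_iff mult.commute)

lemma measurable_g_nth[measurable]: "(\<lambda>\<omega>. g u \<omega> $ c) \<in> borel_measurable M"
  by (rule measurable_compose[OF measurable_g borel_measurable_nth])

lemma integrable_overlap: "integrable M (overlap u v)"
  by (rule integrable_finite_range)
    (unfold overlap_def[abs_def], measurable, rule finite_image_pair[OF finite_range_g finite_range_g])

lemma integrable_norm2_g: "integrable M (\<lambda>\<omega>. (norm (g u \<omega>))\<^sup>2)"
  by (rule integrable_finite_range) (measurable, rule finite_image_comp[OF finite_range_g])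

lemma integrable_g_nth2: "integrable M (\<lambda>\<omega>. (g u \<omega> $ c)\<^sup>2)"
  by (rule integrable_finite_range) (measurable, rule finite_image_comp[OF finite_range_g])

lemma Eg2_nonneg: "0 \<le> Eg2 u"
  unfolding Eg2_def by (rule integral_nonneg_AE) simp

lemma Eg2_eq_sum: "Eg2 u = (\<Sum>c\<in>UNIV. integral\<^sup>L M (\<lambda>\<omega>. (g u \<omega> $ c)\<^sup>2))"
  unfolding Eg2_def power2_norm_vec
  by (rule Bochner_Integration.integral_sum) (rule integrable_g_nth2)

lemma integral_sample_indicator_g_nth2:
  assumes uv: "u < v" and j: "j < n"
  shows "integral\<^sup>L M (\<lambda>\<omega>. indicator {\<omega> \<in> space M. smp v \<omega> = j} \<omega> * (g u \<omega> $ c)\<^sup>2)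
         = integral\<^sup>L M (\<lambda>\<omega>. (g u \<omega> $ c)\<^sup>2) / real n"
proof -
  define G where "G p = (\<Sum>i<n. if snd p u = i then gdir n fs' i (fst (fst p u)) (\<lambda>k. snd (fst p u) k) else 0)"
    for p :: "(nat \<Rightarrow> (real^'d) \<times> (nat \<Rightarrow> real^'d)) \<times> (nat \<Rightarrow> nat)"
  have "G \<in> borel_measurable (past_measure v)"
    unfolding G_def[abs_def]
    by (rule measurable_gdir_sample[OF measurable_past_xh measurable_past_ah measurable_past_smp])
      (use uv in auto)
  then have m: "(\<lambda>p. (G p $ c)\<^sup>2) \<in> borel_measurable (past_measure v)"
    by (intro borel_measurable_power measurable_compose[OF _ borel_measurable_nth])
  have eq: "(g u \<omega> $ c)\<^sup>2 = (G (past v \<omega>) $ c)\<^sup>2" if om: "\<omega> \<in> space M" for \<omega>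
  proof -
    have "G (past v \<omega>) = (\<Sum>i<n. if smp u \<omega> = i
        then gdir n fs' i (xh u \<omega>) (restrict (\<lambda>k. ah u k \<omega>) {..<n}) else 0)"
      unfolding G_def past_def using uv by simp
    also have "\<dots> = g u \<omega>" using smp_range[OF om, of u] g_restrict[OF om, of u] by (simp add: sum.delta')
    finally show ?thesis by simp
  qed
  show ?thesis
    by (rule integral_sample_indicator_mult(1)[OF m eq finite_image_comp[OF finite_range_g] j])
qed

lemma integrable_supp_indicator_g_nth2:
  "integrable M (\<lambda>\<omega>. (if c \<in> supp fs' (smp v \<omega>) then 1 else 0) * (g u \<omega> $ c)\<^sup>2)"
proof (rule integrable_finite_range)
  have "(\<lambda>i. if c \<in> supp fs' i then 1 else 0 :: real) \<in> count_space UNIV \<rightarrow>\<^sub>M borel"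
    by (simp add: measurable_count_space_eq1)
  then have "(\<lambda>\<omega>. (\<lambda>i. if c \<in> supp fs' i then 1 else 0 :: real) (smp v \<omega>)) \<in> borel_measurable M"
    by (rule measurable_compose[OF smp_meas])
  then show "(\<lambda>\<omega>. (if c \<in> supp fs' (smp v \<omega>) then 1 else 0) * (g u \<omega> $ c)\<^sup>2) \<in> borel_measurable M"
    by (intro borel_measurable_times) auto
  show "finite ((\<lambda>\<omega>. (if c \<in> supp fs' (smp v \<omega>) then 1 else 0) * (g u \<omega> $ c)\<^sup>2) ` space M)"
    by (rule finite_image_pair[OF finite_range_smp finite_range_g])
qed

lemma integral_supp_indicator_g_nth2_le:
  assumes uv: "u < v"
  shows "integral\<^sup>L M (\<lambda>\<omega>. (if c \<in> supp fs' (smp v \<omega>) then 1 else 0) * (g u \<omega> $ c)\<^sup>2)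
         \<le> Delta n fs' * integral\<^sup>L M (\<lambda>\<omega>. (g u \<omega> $ c)\<^sup>2)"
proof -
  define J where "J = {j \<in> {..<n}. c \<in> supp fs' j}"
  define E where "E = integral\<^sup>L M (\<lambda>\<omega>. (g u \<omega> $ c)\<^sup>2)"
  define I where "I j = (indicator {\<omega> \<in> space M. smp v \<omega> = j} :: 'w \<Rightarrow> real)" for j
  have E0: "0 \<le> E" unfolding E_def by (rule integral_nonneg_AE) simp
  have split: "(if c \<in> supp fs' (smp v \<omega>) then 1 else 0) * (g u \<omega> $ c)\<^sup>2
      = (\<Sum>j\<in>J. I j \<omega> * (g u \<omega> $ c)\<^sup>2)" if om: "\<omega> \<in> space M" for \<omega>
  proof -
    have "(\<Sum>j\<in>J. I j \<omega> * (g u \<omega> $ c)\<^sup>2) = (\<Sum>j\<in>J. if smp v \<omega> = j then (g u \<omega> $ c)\<^sup>2 else 0)"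
      by (rule sum.cong) (auto simp: I_def indicator_def om)
    also have "\<dots> = (if c \<in> supp fs' (smp v \<omega>) then 1 else 0) * (g u \<omega> $ c)\<^sup>2"
      using smp_range[OF om, of v] by (simp add: J_def sum.delta')
    finally show ?thesis by simp
  qed
  have int: "integrable M (\<lambda>\<omega>. I j \<omega> * (g u \<omega> $ c)\<^sup>2)" for j
    using integrable_real_mult_indicator[OF sample_event_sets[of v j] integrable_g_nth2[of u c]]
    by (simp add: I_def mult.commute)
  have "integral\<^sup>L M (\<lambda>\<omega>. (if c \<in> supp fs' (smp v \<omega>) then 1 else 0) * (g u \<omega> $ c)\<^sup>2)
      = integral\<^sup>L M (\<lambda>\<omega>. \<Sum>j\<in>J. I j \<omega> * (g u \<omega> $ c)\<^sup>2)"
    by (rule Bochner_Integration.integral_cong) (auto simp: split)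
  also have "\<dots> = (\<Sum>j\<in>J. integral\<^sup>L M (\<lambda>\<omega>. I j \<omega> * (g u \<omega> $ c)\<^sup>2))"
    by (rule Bochner_Integration.integral_sum) (rule int)
  also have "\<dots> = (\<Sum>j\<in>J. E / real n)"
    by (rule sum.cong) (auto simp: J_def E_def I_def integral_sample_indicator_g_nth2[OF uv])
  also have "\<dots> = pv n fs' c * E" by (simp add: pv_def J_def)
  also have "\<dots> \<le> Delta n fs' * E" by (rule mult_right_mono[OF pv_le_Delta E0])
  finally show ?thesis by (simp add: E_def)
qed

lemma integral_overlap_le_of_less:
  assumes uv: "u < v"
  shows "integral\<^sup>L M (overlap u v) \<le> sqrt (Delta n fs') / 2 * (Eg2 u + Eg2 v)"
proof (cases "Delta n fs' = 0")
  case True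
  have "overlap u v \<omega> = 0" if om: "\<omega> \<in> space M" for \<omega>
    using g_nth_notin_supp[OF om notin_supp_if_Delta_eq_0[OF True smp_range[OF om]]]
    by (simp add: overlap_def)
  then have "integral\<^sup>L M (overlap u v) = 0"
    by (simp add: Bochner_Integration.integral_cong[of M M _ "\<lambda>_. 0"])
  then show ?thesis using True by simp
next
  case False
  define r where "r = sqrt (Delta n fs')"
  have r0: "0 < r" using False Delta_nonneg[of n fs'] by (simp add: r_def)
  have r2: "r\<^sup>2 = Delta n fs'" using Delta_nonneg[of n fs'] by (simp add: r_def)
  define Ic where "Ic c \<omega> = (if c \<in> supp fs' (smp v \<omega>) then 1 else 0) * (g u \<omega> $ c)\<^sup>2" for c \<omega>
  define R where "R \<omega> = 1 / (2 * r) * (\<Sum>c\<in>UNIV. Ic c \<omega>) + r / 2 * (norm (g v \<omega>))\<^sup>2" for \<omega>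
  have intIc: "integrable M (Ic c)" for c
    unfolding Ic_def[abs_def] by (rule integrable_supp_indicator_g_nth2)
  have pointwise: "overlap u v \<omega> \<le> R \<omega>" if om: "\<omega> \<in> space M" for \<omega>
  proof -
    have "overlap u v \<omega> \<le> (\<Sum>c\<in>UNIV. 1 / (2 * r) * Ic c \<omega> + r / 2 * (g v \<omega> $ c)\<^sup>2)"
      unfolding overlap_def
    proof (rule sum_mono)
      fix c
      show "\<bar>g u \<omega> $ c\<bar> * \<bar>g v \<omega> $ c\<bar> \<le> 1 / (2 * r) * Ic c \<omega> + r / 2 * (g v \<omega> $ c)\<^sup>2"
        using abs_mult_le_weighted_squares[OF r0, of "g u \<omega> $ c" "g v \<omega> $ c"]
          g_nth_notin_supp[OF om, of c v] r0
        by (cases "c \<in> supp fs' (smp v \<omega>)") (simp_all add: Ic_def)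
    qed
    also have "\<dots> = R \<omega>"
      by (simp add: R_def power2_norm_vec sum.distrib sum_distrib_left)
    finally show ?thesis .
  qed
  have "integral\<^sup>L M (overlap u v) \<le> integral\<^sup>L M R"
    using intIc integrable_norm2_g
    by (intro Bochner_Integration.integral_mono[OF integrable_overlap _ pointwise]) (auto simp: R_def)
  also have "integral\<^sup>L M R = 1 / (2 * r) * (\<Sum>c\<in>UNIV. integral\<^sup>L M (Ic c)) + r / 2 * Eg2 v"
  proof -
    have "integral\<^sup>L M R = integral\<^sup>L M (\<lambda>\<omega>. 1 / (2 * r) * (\<Sum>c\<in>UNIV. Ic c \<omega>))
        + integral\<^sup>L M (\<lambda>\<omega>. r / 2 * (norm (g v \<omega>))\<^sup>2)"
      unfolding R_def using intIc integrable_norm2_g by (intro Bochner_Integration.integral_add) auto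
    then show ?thesis
      using intIc by (simp add: Bochner_Integration.integral_sum Eg2_def)
  qed
  also have "(\<Sum>c\<in>UNIV. integral\<^sup>L M (Ic c)) \<le> Delta n fs' * Eg2 u"
  proof -
    have "(\<Sum>c\<in>UNIV. integral\<^sup>L M (Ic c)) \<le> (\<Sum>c\<in>UNIV. Delta n fs' * integral\<^sup>L M (\<lambda>\<omega>. (g u \<omega> $ c)\<^sup>2))"
      unfolding Ic_def[abs_def] by (rule sum_mono) (rule integral_supp_indicator_g_nth2_le[OF uv])
    also have "\<dots> = Delta n fs' * Eg2 u" by (simp add: Eg2_eq_sum sum_distrib_left)
    finally show ?thesis .
  qed
  also have "1 / (2 * r) * (Delta n fs' * Eg2 u) + r / 2 * Eg2 v = r / 2 * (Eg2 u + Eg2 v)"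
    using r0 unfolding r2[symmetric] by (simp add: field_simps power2_eq_square)
  finally show ?thesis using r0 by (simp add: r_def divide_right_mono)
qed

lemma integral_overlap_le:
  "integral\<^sup>L M (overlap u v) \<le> (if u = v then Eg2 u else 0) + sqrt (Delta n fs') / 2 * (Eg2 u + Eg2 v)"
proof -
  have nn: "0 \<le> sqrt (Delta n fs') / 2 * (Eg2 u + Eg2 v)"
    using Eg2_nonneg[of u] Eg2_nonneg[of v] Delta_nonneg[of n fs'] by simp
  consider "u = v" | "u < v" | "v < u" by linarith
  then show ?thesis
  proof cases
    case 1
    then show ?thesis using nn by (simp add: overlap_self Eg2_def)
  next
    case 2
    then show ?thesis using integral_overlap_le_of_less by simp
  next
    case 3
    then show ?thesis using integral_overlap_le_of_less[OF 3] by (simp add: overlap_commute add.commute)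
  qed
qed

lemma abs_xh_minus_x_nth_le:
  assumes om: "\<omega> \<in> space M"
  shows "\<bar>(xh t \<omega> - x t \<omega>) $ c\<bar> \<le> \<gamma> * (\<Sum>u\<in>{t - \<tau>..<t}. \<bar>g u \<omega> $ c\<bar>)"
proof -
  define U where "U = {u. u < t \<and> c \<in> supp fs' (smp u \<omega>) \<and> rd t u c \<omega>}"
  have "U = {..<t} \<inter> U" by (auto simp: U_def)
  then have "(\<Sum>u\<in>U. g u \<omega> $ c) = (\<Sum>u<t. if u \<in> U then g u \<omega> $ c else 0)"
    by (metis finite_lessThan sum.inter_restrict)
  moreover have "(xh t \<omega> - x t \<omega>) $ c = \<gamma> * ((\<Sum>u<t. g u \<omega> $ c) - (\<Sum>u\<in>U. g u \<omega> $ c))"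
    using xh_read[OF om, of t c] by (simp add: x_nth U_def algebra_simps)
  ultimately have "(xh t \<omega> - x t \<omega>) $ c = \<gamma> * (\<Sum>u<t. if u \<in> U then 0 else g u \<omega> $ c)"
    by (simp add: sum_subtractf[symmetric] if_distrib cong: if_cong)
  moreover have "\<bar>\<Sum>u<t. if u \<in> U then 0 else g u \<omega> $ c\<bar> \<le> (\<Sum>u\<in>{t - \<tau>..<t}. \<bar>g u \<omega> $ c\<bar>)"
  proof -
    have "\<bar>\<Sum>u<t. if u \<in> U then 0 else g u \<omega> $ c\<bar> \<le> (\<Sum>u<t. \<bar>if u \<in> U then 0 else g u \<omega> $ c\<bar>)"
      by (rule sum_abs)
    also have "\<dots> \<le> (\<Sum>u<t. if u \<in> {t - \<tau>..<t} then \<bar>g u \<omega> $ c\<bar> else 0)"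
    proof (rule sum_mono)
      fix u assume u: "u \<in> {..<t}"
      show "\<bar>if u \<in> U then 0 else g u \<omega> $ c\<bar> \<le> (if u \<in> {t - \<tau>..<t} then \<bar>g u \<omega> $ c\<bar> else 0)"
      proof (cases "u \<in> {t - \<tau>..<t}")
        case False
        then have "rd t u c \<omega>" using u by (intro overlap_x[OF om]) auto
        then show ?thesis
          using u False g_nth_notin_supp[OF om, of c u] by (auto simp: U_def)
      qed auto
    qed
    also have "\<dots> = (\<Sum>u\<in>{..<t} \<inter> {t - \<tau>..<t}. \<bar>g u \<omega> $ c\<bar>)"
      by (rule sum.inter_restrict[symmetric]) simp
    also have "{..<t} \<inter> {t - \<tau>..<t} = {t - \<tau>..<t}" by auto
    finally show ?thesis .
  qed
  ultimately show ?thesis using gamma_pos by (simp add: abs_mult mult_left_mono)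
qed

lemma inner_xh_minus_x_g_le:
  assumes om: "\<omega> \<in> space M"
  shows "(xh t \<omega> - x t \<omega>) \<bullet> g t \<omega> \<le> \<gamma> * (\<Sum>u\<in>{t - \<tau>..<t}. overlap u t \<omega>)"
proof -
  have "(xh t \<omega> - x t \<omega>) \<bullet> g t \<omega> \<le> (\<Sum>c\<in>UNIV. \<bar>(xh t \<omega> - x t \<omega>) $ c\<bar> * \<bar>g t \<omega> $ c\<bar>)"
    unfolding inner_vec_def by (rule order_trans[OF abs_ge_self order_trans[OF sum_abs]]) (simp add: abs_mult)
  also have "\<dots> \<le> (\<Sum>c\<in>UNIV. \<gamma> * (\<Sum>u\<in>{t - \<tau>..<t}. \<bar>g u \<omega> $ c\<bar>) * \<bar>g t \<omega> $ c\<bar>)"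
    by (intro sum_mono mult_right_mono abs_xh_minus_x_nth_le[OF om]) simp
  also have "\<dots> = \<gamma> * (\<Sum>u\<in>{t - \<tau>..<t}. overlap u t \<omega>)"
    unfolding overlap_def
    by (simp add: sum_distrib_left sum_distrib_right sum.swap[of _ UNIV] mult.assoc)
  finally show ?thesis .
qed

lemma norm2_xh_minus_x_le:
  assumes om: "\<omega> \<in> space M"
  shows "(norm (xh t \<omega> - x t \<omega>))\<^sup>2 \<le> \<gamma>\<^sup>2 * (\<Sum>u\<in>{t - \<tau>..<t}. \<Sum>u'\<in>{t - \<tau>..<t}. overlap u u' \<omega>)"
proof -
  have "(norm (xh t \<omega> - x t \<omega>))\<^sup>2 = (\<Sum>c\<in>UNIV. \<bar>(xh t \<omega> - x t \<omega>) $ c\<bar>\<^sup>2)"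
    by (simp add: power2_norm_vec)
  also have "\<dots> \<le> (\<Sum>c\<in>UNIV. (\<gamma> * (\<Sum>u\<in>{t - \<tau>..<t}. \<bar>g u \<omega> $ c\<bar>))\<^sup>2)"
    by (intro sum_mono power_mono abs_xh_minus_x_nth_le[OF om] abs_ge_zero)
  also have "\<dots> = (\<Sum>c\<in>UNIV. \<gamma>\<^sup>2 * (\<Sum>u\<in>{t - \<tau>..<t}. \<Sum>u'\<in>{t - \<tau>..<t}. \<bar>g u \<omega> $ c\<bar> * \<bar>g u' \<omega> $ c\<bar>))"
    by (rule sum.cong[OF refl]) (simp only: power2_eq_square sum_product[symmetric] ac_simps)
  also have "\<dots> = \<gamma>\<^sup>2 * (\<Sum>c\<in>UNIV. \<Sum>u\<in>{t - \<tau>..<t}. \<Sum>u'\<in>{t - \<tau>..<t}. \<bar>g u \<omega> $ c\<bar> * \<bar>g u' \<omega> $ c\<bar>)"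
    by (simp only: sum_distrib_left)
  also have "\<dots> = \<gamma>\<^sup>2 * (\<Sum>u\<in>{t - \<tau>..<t}. \<Sum>u'\<in>{t - \<tau>..<t}. overlap u u' \<omega>)"
    unfolding overlap_def by (subst sum.swap) (rule arg_cong[where f = "(*) _"], rule sum.cong[OF refl], rule sum.swap)
  finally show ?thesis .
qed

lemma integrable_norm2_x: "integrable M (\<lambda>\<omega>. (norm (x t \<omega> - xstar))\<^sup>2)"
  by (rule integrable_finite_range) (measurable, rule finite_image_comp[OF finite_range_x])

lemma integrable_inner_xh_g: "integrable M (\<lambda>\<omega>. (xh t \<omega> - xstar) \<bullet> g t \<omega>)"
  by (rule integrable_finite_range) (measurable, rule finite_image_pair[OF finite_range_xh finite_range_g])

lemma integrable_inner_delay_g: "integrable M (\<lambda>\<omega>. (xh t \<omega> - x t \<omega>) \<bullet> g t \<omega>)"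
  by (rule integrable_finite_range)
    (measurable, rule finite_image_pair[OF finite_image_pair[OF finite_range_xh finite_range_x] finite_range_g])

lemma integrable_inner_grad_f: "integrable M (\<lambda>\<omega>. (xh t \<omega> - xstar) \<bullet> grad_f (xh t \<omega>))"
  by (rule integrable_finite_range) (measurable, rule finite_image_comp[OF finite_range_xh])

lemma integrable_favg_xh: "integrable M (\<lambda>\<omega>. favg n fs (xh t \<omega>))"
  by (rule integrable_finite_range) (measurable, rule finite_image_comp[OF finite_range_xh])

lemma integrable_norm2_delay: "integrable M (\<lambda>\<omega>. (norm (xh t \<omega> - x t \<omega>))\<^sup>2)"
  by (rule integrable_finite_range) (measurable, rule finite_image_pair[OF finite_range_xh finite_range_x])

lemma a_Suc_eq:
  "a (t + 1) = a t - 2 * \<gamma> * integral\<^sup>L M (\<lambda>\<omega>. (xh t \<omega> - xstar) \<bullet> grad_f (xh t \<omega>))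
     + 2 * \<gamma> * integral\<^sup>L M (\<lambda>\<omega>. (xh t \<omega> - x t \<omega>) \<bullet> g t \<omega>) + \<gamma>\<^sup>2 * Eg2 t"
proof -
  have pointwise: "(norm (x (t + 1) \<omega> - xstar))\<^sup>2 = (norm (x t \<omega> - xstar))\<^sup>2
      - 2 * \<gamma> * ((xh t \<omega> - xstar) \<bullet> g t \<omega>) + 2 * \<gamma> * ((xh t \<omega> - x t \<omega>) \<bullet> g t \<omega>)
      + \<gamma>\<^sup>2 * (norm (g t \<omega>))\<^sup>2" for \<omega>
    unfolding power2_norm_eq_inner Suc_eq_plus1[symmetric] x_Suc
    by (simp add: inner_diff_left inner_diff_right inner_commute algebra_simps power2_eq_square)
  have "a (t + 1) = integral\<^sup>L M (\<lambda>\<omega>. (norm (x t \<omega> - xstar))\<^sup>2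
      - 2 * \<gamma> * ((xh t \<omega> - xstar) \<bullet> g t \<omega>) + 2 * \<gamma> * ((xh t \<omega> - x t \<omega>) \<bullet> g t \<omega>)
      + \<gamma>\<^sup>2 * (norm (g t \<omega>))\<^sup>2)"
    unfolding a_def by (simp only: pointwise)
  also have "\<dots> = a t - 2 * \<gamma> * integral\<^sup>L M (\<lambda>\<omega>. (xh t \<omega> - xstar) \<bullet> g t \<omega>)
      + 2 * \<gamma> * integral\<^sup>L M (\<lambda>\<omega>. (xh t \<omega> - x t \<omega>) \<bullet> g t \<omega>) + \<gamma>\<^sup>2 * Eg2 t"
    using integrable_norm2_x[of t] integrable_inner_xh_g[of t] integrable_inner_delay_g[of t]
      integrable_norm2_g[of t]
    by (simp add: a_def Eg2_def)
  finally show ?thesis by (simp add: expectation_inner_g_eq_grad_f)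
qed

lemma strong_convexity_bound:
  "e t + \<mu> / 4 * a t - \<mu> / 2 * integral\<^sup>L M (\<lambda>\<omega>. (norm (xh t \<omega> - x t \<omega>))\<^sup>2)
     \<le> integral\<^sup>L M (\<lambda>\<omega>. (xh t \<omega> - xstar) \<bullet> grad_f (xh t \<omega>))"
proof -
  have pointwise: "favg n fs (xh t \<omega>) - favg n fs xstar + \<mu> / 4 * (norm (x t \<omega> - xstar))\<^sup>2
      - \<mu> / 2 * (norm (xh t \<omega> - x t \<omega>))\<^sup>2 \<le> (xh t \<omega> - xstar) \<bullet> grad_f (xh t \<omega>)" for \<omega>
  proof -
    have "(norm (x t \<omega> - xstar))\<^sup>2 \<le> 2 * (norm (xh t \<omega> - xstar))\<^sup>2 + 2 * (norm (xh t \<omega> - x t \<omega>))\<^sup>2"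
      using power2_norm_diff_le[of "xh t \<omega> - xstar" "xh t \<omega> - x t \<omega>"] by simp
    then have "\<mu> / 4 * (norm (x t \<omega> - xstar))\<^sup>2
        \<le> \<mu> / 4 * (2 * (norm (xh t \<omega> - xstar))\<^sup>2 + 2 * (norm (xh t \<omega> - x t \<omega>))\<^sup>2)"
      using mu_pos by (intro mult_left_mono) auto
    then show ?thesis using strongly_convex_grad_f[of "xh t \<omega>"] by (simp add: algebra_simps)
  qed
  have "integral\<^sup>L M (\<lambda>\<omega>. favg n fs (xh t \<omega>) - favg n fs xstar + \<mu> / 4 * (norm (x t \<omega> - xstar))\<^sup>2
      - \<mu> / 2 * (norm (xh t \<omega> - x t \<omega>))\<^sup>2) \<le> integral\<^sup>L M (\<lambda>\<omega>. (xh t \<omega> - xstar) \<bullet> grad_f (xh t \<omega>))"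
    using integrable_favg_xh[of t] integrable_norm2_x[of t] integrable_norm2_delay[of t]
      integrable_inner_grad_f[of t]
    by (intro Bochner_Integration.integral_mono pointwise) auto
  then show ?thesis
    using integrable_favg_xh[of t] integrable_norm2_x[of t] integrable_norm2_delay[of t]
    by (simp add: e_def a_def prob_space)
qed

lemma expectation_inner_delay_le:
  "integral\<^sup>L M (\<lambda>\<omega>. (xh t \<omega> - x t \<omega>) \<bullet> g t \<omega>)
     \<le> \<gamma> * sqrt (Delta n fs') / 2 * ((\<Sum>u\<in>{t - \<tau>..<t}. Eg2 u) + real \<tau> * Eg2 t)"
proof -
  define W where "W = {t - \<tau>..<t}"
  have "integral\<^sup>L M (\<lambda>\<omega>. (xh t \<omega> - x t \<omega>) \<bullet> g t \<omega>) \<le> integral\<^sup>L M (\<lambda>\<omega>. \<gamma> * (\<Sum>u\<in>W. overlap u t \<omega>))"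
    unfolding W_def using integrable_inner_delay_g[of t] integrable_overlap
    by (intro Bochner_Integration.integral_mono inner_xh_minus_x_g_le) auto
  also have "\<dots> = \<gamma> * (\<Sum>u\<in>W. integral\<^sup>L M (overlap u t))"
    using integrable_overlap by (simp add: Bochner_Integration.integral_sum)
  also have "\<dots> \<le> \<gamma> * (\<Sum>u\<in>W. sqrt (Delta n fs') / 2 * (Eg2 u + Eg2 t))"
    using gamma_pos integral_overlap_le_of_less by (intro mult_left_mono sum_mono) (auto simp: W_def)
  also have "(\<Sum>u\<in>W. sqrt (Delta n fs') / 2 * (Eg2 u + Eg2 t))
      = sqrt (Delta n fs') / 2 * ((\<Sum>u\<in>W. Eg2 u) + real (card W) * Eg2 t)"
    by (simp only: sum_distrib_left[symmetric] sum.distrib) simp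
  also have "\<gamma> * (sqrt (Delta n fs') / 2 * ((\<Sum>u\<in>W. Eg2 u) + real (card W) * Eg2 t))
      \<le> \<gamma> * (sqrt (Delta n fs') / 2 * ((\<Sum>u\<in>W. Eg2 u) + real \<tau> * Eg2 t))"
    using gamma_pos Delta_nonneg[of n fs'] Eg2_nonneg[of t]
    by (intro mult_left_mono add_left_mono mult_right_mono) (auto simp: W_def)
  finally show ?thesis by (simp add: W_def)
qed

lemma expectation_norm2_delay_le:
  "integral\<^sup>L M (\<lambda>\<omega>. (norm (xh t \<omega> - x t \<omega>))\<^sup>2)
     \<le> \<gamma>\<^sup>2 * (1 + sqrt (Delta n fs') * real \<tau>) * (\<Sum>u\<in>{t - \<tau>..<t}. Eg2 u)"
proof -
  define W where "W = {t - \<tau>..<t}"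
  define S where "S = (\<Sum>u\<in>W. Eg2 u)"
  define r where "r = sqrt (Delta n fs')"
  have "integral\<^sup>L M (\<lambda>\<omega>. (norm (xh t \<omega> - x t \<omega>))\<^sup>2)
      \<le> integral\<^sup>L M (\<lambda>\<omega>. \<gamma>\<^sup>2 * (\<Sum>u\<in>W. \<Sum>u'\<in>W. overlap u u' \<omega>))"
    unfolding W_def using integrable_norm2_delay[of t] integrable_overlap
    by (intro Bochner_Integration.integral_mono norm2_xh_minus_x_le) auto
  also have "\<dots> = \<gamma>\<^sup>2 * (\<Sum>u\<in>W. \<Sum>u'\<in>W. integral\<^sup>L M (overlap u u'))"
    using integrable_overlap by (simp add: Bochner_Integration.integral_sum)
  also have "\<dots> \<le> \<gamma>\<^sup>2 * (\<Sum>u\<in>W. \<Sum>u'\<in>W. (if u = u' then Eg2 u else 0) + r / 2 * (Eg2 u + Eg2 u'))"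
    unfolding r_def by (intro mult_left_mono sum_mono integral_overlap_le) auto
  also have "(\<Sum>u\<in>W. \<Sum>u'\<in>W. (if u = u' then Eg2 u else 0) + r / 2 * (Eg2 u + Eg2 u'))
      = (\<Sum>u\<in>W. Eg2 u + r / 2 * (real (card W) * Eg2 u + S))"
  proof (rule sum.cong[OF refl])
    fix u assume u: "u \<in> W"
    have "(\<Sum>u'\<in>W. if u = u' then Eg2 u else 0) = Eg2 u"
      using u by (simp add: W_def)
    moreover have "(\<Sum>u'\<in>W. r / 2 * (Eg2 u + Eg2 u')) = r / 2 * (real (card W) * Eg2 u + S)"
      by (simp only: sum_distrib_left[symmetric] sum.distrib) (simp add: S_def)
    ultimately show "(\<Sum>u'\<in>W. (if u = u' then Eg2 u else 0) + r / 2 * (Eg2 u + Eg2 u'))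
        = Eg2 u + r / 2 * (real (card W) * Eg2 u + S)"
      by (simp only: sum.distrib)
  qed
  also have "\<dots> = S + r * real (card W) * S"
  proof -
    have "(\<Sum>u\<in>W. r / 2 * (real (card W) * Eg2 u + S)) = r / 2 * (\<Sum>u\<in>W. real (card W) * Eg2 u + S)"
      by (rule sum_distrib_left[symmetric])
    also have "(\<Sum>u\<in>W. real (card W) * Eg2 u + S) = real (card W) * S + real (card W) * S"
      by (simp only: sum.distrib sum_distrib_left[symmetric] S_def) simp
    finally have "(\<Sum>u\<in>W. Eg2 u + r / 2 * (real (card W) * Eg2 u + S))
        = S + r / 2 * (real (card W) * S + real (card W) * S)"
      by (simp only: sum.distrib) (simp add: S_def)
    then show ?thesis by (simp add: algebra_simps)
  qed
  also have "\<gamma>\<^sup>2 * (S + r * real (card W) * S) \<le> \<gamma>\<^sup>2 * ((1 + r * real \<tau>) * S)"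
  proof -
    have S0: "0 \<le> S" unfolding S_def by (intro sum_nonneg Eg2_nonneg)
    have r0: "0 \<le> r" using Delta_nonneg[of n fs'] by (simp add: r_def)
    have "real (card W) \<le> real \<tau>" by (simp add: W_def)
    then have "r * real (card W) * S \<le> r * real \<tau> * S"
      using S0 r0 by (intro mult_right_mono mult_left_mono)
    then have "S + r * real (card W) * S \<le> (1 + r * real \<tau>) * S"
      by (simp add: distrib_right)
    then show ?thesis by (rule mult_left_mono) simp
  qed
  finally show ?thesis by (simp add: S_def r_def W_def mult.assoc)
qed

lemma a_Suc_le:
  "a (t + 1) \<le> (1 - \<gamma> * \<mu> / 2) * a t
     + \<gamma>\<^sup>2 * (1 + sqrt (Delta n fs') * real \<tau>) * Eg2 t
     + \<gamma>\<^sup>2 * (sqrt (Delta n fs') + \<gamma> * \<mu> * (1 + sqrt (Delta n fs') * real \<tau>)) * (\<Sum>u\<in>{t - \<tau>..<t}. Eg2 u)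
     - 2 * \<gamma> * e t"
proof -
  define r where "r = sqrt (Delta n fs')"
  define S where "S = (\<Sum>u\<in>{t - \<tau>..<t}. Eg2 u)"
  define Egrad where "Egrad = integral\<^sup>L M (\<lambda>\<omega>. (xh t \<omega> - xstar) \<bullet> grad_f (xh t \<omega>))"
  define Einner where "Einner = integral\<^sup>L M (\<lambda>\<omega>. (xh t \<omega> - x t \<omega>) \<bullet> g t \<omega>)"
  define Edelay where "Edelay = integral\<^sup>L M (\<lambda>\<omega>. (norm (xh t \<omega> - x t \<omega>))\<^sup>2)"
  have grad: "2 * \<gamma> * (e t + \<mu> / 4 * a t - \<mu> / 2 * Edelay) \<le> 2 * \<gamma> * Egrad"
    using strong_convexity_bound[of t] gamma_pos by (simp add: Egrad_def Edelay_def)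
  have inner: "2 * \<gamma> * Einner \<le> \<gamma>\<^sup>2 * r * (S + real \<tau> * Eg2 t)"
    using mult_left_mono[OF expectation_inner_delay_le[of t], of "2 * \<gamma>"] gamma_pos
    by (simp add: Einner_def r_def S_def power2_eq_square algebra_simps)
  have delay: "\<gamma> * \<mu> * Edelay \<le> \<gamma> * \<mu> * (\<gamma>\<^sup>2 * (1 + r * real \<tau>) * S)"
    using mult_left_mono[OF expectation_norm2_delay_le[of t], of "\<gamma> * \<mu>"] gamma_pos mu_pos
    by (simp add: Edelay_def r_def S_def)
  have "a (t + 1) = a t - 2 * \<gamma> * Egrad + 2 * \<gamma> * Einner + \<gamma>\<^sup>2 * Eg2 t"
    unfolding Egrad_def Einner_def by (rule a_Suc_eq)
  also have "\<dots> \<le> a t - 2 * \<gamma> * (e t + \<mu> / 4 * a t - \<mu> / 2 * Edelay)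
      + \<gamma>\<^sup>2 * r * (S + real \<tau> * Eg2 t) + \<gamma>\<^sup>2 * Eg2 t"
    using grad inner by linarith
  also have "\<dots> = (1 - \<gamma> * \<mu> / 2) * a t + \<gamma> * \<mu> * Edelay
      + \<gamma>\<^sup>2 * r * (S + real \<tau> * Eg2 t) + \<gamma>\<^sup>2 * Eg2 t - 2 * \<gamma> * e t"
    by (simp add: algebra_simps)
  also have "\<dots> \<le> (1 - \<gamma> * \<mu> / 2) * a t + \<gamma> * \<mu> * (\<gamma>\<^sup>2 * (1 + r * real \<tau>) * S)
      + \<gamma>\<^sup>2 * r * (S + real \<tau> * Eg2 t) + \<gamma>\<^sup>2 * Eg2 t - 2 * \<gamma> * e t"
    using delay by linarith
  also have "\<dots> = (1 - \<gamma> * \<mu> / 2) * a t + \<gamma>\<^sup>2 * (1 + r * real \<tau>) * Eg2 t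
      + \<gamma>\<^sup>2 * (r + \<gamma> * \<mu> * (1 + r * real \<tau>)) * S - 2 * \<gamma> * e t"
    by (simp add: algebra_simps power2_eq_square)
  finally show ?thesis by (simp add: r_def S_def)
qed

end

theorem lemma1:
  fixes M :: "'w measure"
    and n :: nat and fs :: "nat \<Rightarrow> real^'d \<Rightarrow> real" and fs' :: "nat \<Rightarrow> real^'d \<Rightarrow> real^'d"
    and L \<mu> \<gamma> :: real and \<tau> :: nat and xstar x0 :: "real^'d" and \<alpha>0 :: "nat \<Rightarrow> real^'d"
    and smp :: "nat \<Rightarrow> 'w \<Rightarrow> nat"
    and xh :: "nat \<Rightarrow> 'w \<Rightarrow> real^'d"
    and ah :: "nat \<Rightarrow> nat \<Rightarrow> 'w \<Rightarrow> real^'d"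
    and rd :: "nat \<Rightarrow> nat \<Rightarrow> 'd \<Rightarrow> 'w \<Rightarrow> bool"
    and A :: "nat \<Rightarrow> nat \<Rightarrow> 'd \<Rightarrow> 'w \<Rightarrow> nat option"
    and g :: "nat \<Rightarrow> 'w \<Rightarrow> real^'d" and x :: "nat \<Rightarrow> 'w \<Rightarrow> real^'d"
    and a e :: "nat \<Rightarrow> real"
  assumes n_pos: "n \<ge> 1"
    and conv: "\<And>i. i < n \<Longrightarrow> convex_on UNIV (fs i)"
    and grad: "\<And>i y. i < n \<Longrightarrow> (fs i has_derivative (\<lambda>h. fs' i y \<bullet> h)) (at y)"
    and lip: "\<And>i. i < n \<Longrightarrow> L-lipschitz_on UNIV (fs' i)"
    and mu_pos: "\<mu> > 0"
    and strong: "strongly_convex_on \<mu> UNIV (favg n fs)"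
    and minim: "\<And>y. favg n fs xstar \<le> favg n fs y"
    and gamma_pos: "\<gamma> > 0"
    and alpha0_supp: "\<And>j v. j < n \<Longrightarrow> v \<notin> supp fs' j \<Longrightarrow> \<alpha>0 j $ v = 0"
    and P: "prob_space M"
    and smp_meas: "\<And>t. smp t \<in> measurable M (count_space UNIV)"
    and xh_meas: "\<And>t. xh t \<in> borel_measurable M"
    and ah_meas: "\<And>t j. ah t j \<in> borel_measurable M"
    and smp_range: "\<And>t \<omega>. \<omega> \<in> space M \<Longrightarrow> smp t \<omega> < n"
    and smp_unif: "\<And>t j. j < n \<Longrightarrow> measure M {\<omega> \<in> space M. smp t \<omega> = j} = 1 / real n"
    and smp_indep: "\<And>t. prob_space.indep_set M
        (sets (vimage_algebra (space M) (smp t) (count_space UNIV)))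
        (sets (vimage_algebra (space M)
           (\<lambda>\<omega>. (\<lambda>s\<in>{..t}. (xh s \<omega>, \<lambda>j\<in>{..<n}. ah s j \<omega>), \<lambda>s\<in>{..<t}. smp s \<omega>))
           (PiM {..t} (\<lambda>_. borel \<Otimes>\<^sub>M PiM {..<n} (\<lambda>_. borel)) \<Otimes>\<^sub>M PiM {..<t} (\<lambda>_. count_space UNIV))))"
    and g_def: "g \<equiv> (\<lambda>t \<omega>. gdir n fs' (smp t \<omega>) (xh t \<omega>) (\<lambda>j. ah t j \<omega>))"
    and xh_read: "\<And>t v \<omega>. \<omega> \<in> space M \<Longrightarrow>
        xh t \<omega> $ v = x0 $ v - \<gamma> * (\<Sum>u | u < t \<and> v \<in> supp fs' (smp u \<omega>) \<and> rd t u v \<omega>. g u \<omega> $ v)"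
    and overlap_x: "\<And>t u v \<omega>. \<omega> \<in> space M \<Longrightarrow> u + \<tau> + 1 \<le> t \<Longrightarrow> rd t u v \<omega>"
    and ah_read: "\<And>t j v \<omega>. \<omega> \<in> space M \<Longrightarrow> j < n \<Longrightarrow>
        ah t j \<omega> $ v = (case A t j v \<omega> of None \<Rightarrow> \<alpha>0 j $ v | Some u \<Rightarrow> fs' j (xh u \<omega>) $ v)"
    and A_valid: "\<And>t j v \<omega> u. \<omega> \<in> space M \<Longrightarrow> A t j v \<omega> = Some u \<Longrightarrow>
        u < t \<and> smp u \<omega> = j \<and> v \<in> supp fs' j"
    and overlap_alpha: "\<And>t j v \<omega> u. \<omega> \<in> space M \<Longrightarrow> u + \<tau> + 1 \<le> t \<Longrightarrow> smp u \<omega> = j \<Longrightarrow>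
        v \<in> supp fs' j \<Longrightarrow> A t j v \<omega> \<noteq> None"
    and x_def: "x \<equiv> (\<lambda>t \<omega>. x0 - \<gamma> *\<^sub>R (\<Sum>u<t. g u \<omega>))"
    and a_def: "a \<equiv> (\<lambda>t. integral\<^sup>L M (\<lambda>\<omega>. (norm (x t \<omega> - xstar))\<^sup>2))"
    and e_def: "e \<equiv> (\<lambda>t. integral\<^sup>L M (\<lambda>\<omega>. favg n fs (xh t \<omega>)) - favg n fs xstar)"
  shows "a (t + 1) \<le> (1 - \<gamma> * \<mu> / 2) * a t
           + \<gamma>\<^sup>2 * (1 + sqrt (Delta n fs') * real \<tau>) * integral\<^sup>L M (\<lambda>\<omega>. (norm (g t \<omega>))\<^sup>2)
           + \<gamma>\<^sup>2 * (sqrt (Delta n fs') + \<gamma> * \<mu> * (1 + sqrt (Delta n fs') * real \<tau>))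
               * (\<Sum>u\<in>{t - \<tau>..<t}. integral\<^sup>L M (\<lambda>\<omega>. (norm (g u \<omega>))\<^sup>2))
           - 2 * \<gamma> * e t"
proof -
  have cont: "\<And>i. i < n \<Longrightarrow> continuous_on UNIV (fs' i)"
    using lip lipschitz_on_continuous_on by blast
  interpret asaga M n fs fs' \<mu> \<gamma> \<tau> xstar x0 \<alpha>0 smp xh ah rd A g x a e
    by (rule asaga.intro) (fact assms cont)+
  show ?thesis using a_Suc_le by (simp add: Eg2_def)
qed

end
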